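(* Let $F,S_0,S_1,\ldots,S_m$ be formulas. If $\emptyset[F,S_1,\ldots,S_m]=\emptyset[S_1,\ldots,S_m]$, then $\emptyset[F,S_0,S_1,\ldots,S_m]=\emptyset[S_0,S_1,\ldots,S_m]$.
   Context: Propositional models are truth assignments over a finite set of variables; a formula used where a set of models is expected stands for its set of models. A doxastic state is a sequence $[C(0),\ldots,C(k)]$ of nonempty, pairwise disjoint sets of models covering all models. The flat doxastic state $\emptyset$ is $[\text{all models}]$. Lexicographic revision: $C\,\mathrm{lex}(A) = [C(0)\cap A,\ldots,C(k)\cap A, C(0)\setminus A,\ldots,C(k)\setminus A]$, empty sets discarded. $\emptyset[T_1,\ldots,T_n]$ denotes $\emptyset$ revised lexicographically by $T_1$, then $T_2$, ..., then $T_n$. *)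

theory Defs
  imports Main
begin

datatype 'v formula =
    FTrue | FFalse | Var 'v | Neg "'v formula"
  | Conj "'v formula" "'v formula" | Disj "'v formula" "'v formula"
  | Impl "'v formula" "'v formula"

type_synonym 'v model = "'v set"

fun sat :: "'v model \<Rightarrow> 'v formula \<Rightarrow> bool" where
  "sat M FTrue = True"
| "sat M FFalse = False"
| "sat M (Var x) = (x \<in> M)"
| "sat M (Neg f) = (\<not> sat M f)"
| "sat M (Conj f g) = (sat M f \<and> sat M g)"
| "sat M (Disj f g) = (sat M f \<or> sat M g)"
| "sat M (Impl f g) = (sat M f \<longrightarrow> sat M g)"

definition mods :: "'v formula \<Rightarrow> 'v model set" where
  "mods f = {M. sat M f}"

type_synonym 'v doxastic_state = "'v model set list"

definition doxastic_state :: "'v doxastic_state \<Rightarrow> bool" where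
  "doxastic_state C \<longleftrightarrow> (\<forall>c\<in>set C. c \<noteq> {}) \<and> \<Union>(set C) = UNIV
     \<and> (\<forall>i<length C. \<forall>j<length C. i \<noteq> j \<longrightarrow> C!i \<inter> C!j = {})"

definition flat :: "'v doxastic_state" where
  "flat = [UNIV]"

definition lex :: "'v doxastic_state \<Rightarrow> 'v formula \<Rightarrow> 'v doxastic_state" where
  "lex C A = filter (\<lambda>c. c \<noteq> {}) (map (\<lambda>c. c \<inter> mods A) C @ map (\<lambda>c. c - mods A) C)"

definition revs :: "'v doxastic_state \<Rightarrow> 'v formula list \<Rightarrow> 'v doxastic_state" where
  "revs C Ts = foldl lex C Ts"

end

theory Submission
  imports Defs
begin

text \<open>Starting from the flat state, the first revision \<open>F\<close> acts with the lowest priority: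
  revising by \<open>F\<close> and then by \<open>Ss\<close> is the same as revising by \<open>Ss\<close> and finally splitting every
  class into its \<open>F\<close>-part and its non-\<open>F\<close>-part. So the hypothesis says that no class of
  \<open>\<emptyset>[Ss]\<close> is cut by \<open>F\<close>. The classes of \<open>\<emptyset>[S0, Ss]\<close> are obtained by splitting those of
  \<open>\<emptyset>[Ss]\<close> by \<open>S0\<close>, so they are subsets of them and are not cut by \<open>F\<close> either; hence
  the final split by \<open>F\<close> changes nothing.\<close>

definition refine :: "'a set list \<Rightarrow> 'a set \<Rightarrow> 'a set list" where
  "refine C X = filter (\<lambda>c. c \<noteq> {}) (concat (map (\<lambda>c. [c \<inter> X, c - X]) C))"

lemma refine_Nil [simp]: "refine [] X = []"
  by (simp add: refine_def)

lemma refine_Cons: "refine (c # C) X = filter (\<lambda>c. c \<noteq> {}) [c \<inter> X, c - X] @ refine C X"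
  by (simp add: refine_def)

lemma refine_append: "refine (C @ D) X = refine C X @ refine D X"
  by (induction C) (simp_all add: refine_Cons)

lemma refine_filter_nonempty: "refine (filter (\<lambda>c. c \<noteq> {}) C) X = refine C X"
  by (induction C) (simp_all add: refine_Cons)

lemma filter_nonempty_map_filter_nonempty:
  assumes "f {} = {}"
  shows "filter (\<lambda>c. c \<noteq> {}) (map f (filter (\<lambda>c. c \<noteq> {}) C))
    = filter (\<lambda>c. c \<noteq> {}) (map f C)"
  using assms by (induction C) auto

lemma filter_map_refine:
  assumes "\<And>c. f (c \<inter> X) = f c \<inter> X" and "\<And>c. f (c - X) = f c - X" and "f {} = {}"
  shows "filter (\<lambda>c. c \<noteq> {}) (map f (refine C X)) = refine (map f C) X"
proof (induction C)
  case (Cons c C)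
  then show ?case
    by (simp only: refine_Cons list.map map_append filter_append assms
        filter_nonempty_map_filter_nonempty[of f, OF assms(3)])
qed simp

lemma lex_refine: "lex (refine C X) A = refine (lex C A) X"
proof -
  have "filter (\<lambda>c. c \<noteq> {}) (map (\<lambda>c. c \<inter> mods A) (refine C X))
      = refine (map (\<lambda>c. c \<inter> mods A) C) X"
    by (rule filter_map_refine) auto
  moreover have "filter (\<lambda>c. c \<noteq> {}) (map (\<lambda>c. c - mods A) (refine C X))
      = refine (map (\<lambda>c. c - mods A) C) X"
    by (rule filter_map_refine) auto
  ultimately show ?thesis
    by (simp add: lex_def refine_append refine_filter_nonempty)
qed

lemma revs_refine: "revs (refine C X) Ts = refine (revs C Ts) X"
  unfolding revs_def by (induction Ts arbitrary: C) (simp_all add: lex_refine)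

lemma revs_flat_Cons: "revs flat (F # Ts) = refine (revs flat Ts) (mods F)"
proof -
  have "lex flat F = refine flat (mods F)"
    by (simp add: lex_def refine_def flat_def)
  then show ?thesis
    by (simp add: revs_def revs_refine[unfolded revs_def])
qed

lemma empty_notin_revs_flat: "{} \<notin> set (revs flat Ts)"
proof -
  have "{} \<notin> set (foldl lex C Ts)" if "{} \<notin> set C" for C :: "'a set set list"
    using that by (induction Ts arbitrary: C) (simp_all add: lex_def)
  then show ?thesis
    by (simp add: revs_def flat_def)
qed

lemma refine_not_cut:
  "c \<in> set (refine D X) \<Longrightarrow> c \<subseteq> X \<or> c \<inter> X = {}"
  by (auto simp: refine_def)

lemma refine_subset_class: "c \<in> set (refine D X) \<Longrightarrow> \<exists>d\<in>set D. c \<subseteq> d"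
  by (auto simp: refine_def)

lemma refine_eq_self:
  assumes "{} \<notin> set D" and "\<forall>c\<in>set D. c \<subseteq> X \<or> c \<inter> X = {}"
  shows "refine D X = D"
  using assms by (induction D) (auto simp: refine_Cons Int_absorb2 Diff_triv)

theorem mainTheorem9:
  fixes F S0 :: "('v::finite) formula" and Ss :: "'v formula list"
  assumes "revs flat (F # Ss) = revs flat Ss"
  shows "revs flat (F # S0 # Ss) = revs flat (S0 # Ss)"
proof -
  define D where "D = revs flat Ss"
  have "refine D (mods F) = D"
    using assms by (simp add: D_def revs_flat_Cons)
  then have D_not_cut: "\<forall>d\<in>set D. d \<subseteq> mods F \<or> d \<inter> mods F = {}"
    using refine_not_cut by metis
  have "{} \<notin> set (refine D (mods S0))"
    using empty_notin_revs_flat[of "S0 # Ss"] by (simp add: D_def revs_flat_Cons)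
  moreover have "\<forall>c\<in>set (refine D (mods S0)). c \<subseteq> mods F \<or> c \<inter> mods F = {}"
    using D_not_cut by (fastforce dest: refine_subset_class)
  ultimately have "refine (refine D (mods S0)) (mods F) = refine D (mods S0)"
    by (rule refine_eq_self)
  then show ?thesis
    by (simp add: D_def revs_flat_Cons)
qed

end
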